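(* Let $G_m$ be a bounded Vilenkin group. There is a constant $c>0$ depending only on $m$ such that for every integer $A\ge3$, with $q_A:=M_{2A}+M_{2A-2}+\dots+M_2+M_0$ and $f_A:=D_{M_{2A+1}}-D_{M_{2A}}$, $$\int_{G_m}|\sigma_{q_A}f_A(x)|^{1/2}\,d\mu(x)\ge \frac{c\,A}{\sqrt{M_{2A}}}.$$
   Context: Let $m=(m_0,m_1,\dots)$ be integers $m_k\ge2$ with $\sup_km_k<\infty$; $G_m=\prod_kZ_{m_k}$ with the product of uniform probability measures $\mu$. $M_0=1$, $M_{k+1}=m_kM_k$; $n=\sum_jn_jM_j$, $n_j\in Z_{m_j}$. $r_k(x)=\exp(2\pi ix_k/m_k)$, $\psi_n=\prod_kr_k^{n_k}$, $D_n=\sum_{k=0}^{n-1}\psi_k$. For $f\in L_1(G_m)$: $\hat f(i)=\int f\overline{\psi_i}d\mu$, $S_nf=\sum_{k=0}^{n-1}\hat f(k)\psi_k$ ($S_0f=0$), $\sigma_nf=\frac1n\sum_{k=0}^{n-1}S_kf$. *)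

theory Defs
  imports "HOL-Probability.Probability"
begin

definition vil_measure :: "(nat \<Rightarrow> nat) \<Rightarrow> (nat \<Rightarrow> nat) measure" where
  "vil_measure m = PiM UNIV (\<lambda>k. uniform_count_measure {0..<m k})"

definition vilM :: "(nat \<Rightarrow> nat) \<Rightarrow> nat \<Rightarrow> nat" where
  "vilM m k = (\<Prod>j<k. m j)"

definition vil_digit :: "(nat \<Rightarrow> nat) \<Rightarrow> nat \<Rightarrow> nat \<Rightarrow> nat" where
  "vil_digit m n k = (n div vilM m k) mod m k"

definition vil_r :: "(nat \<Rightarrow> nat) \<Rightarrow> nat \<Rightarrow> (nat \<Rightarrow> nat) \<Rightarrow> complex" where
  "vil_r m k x = exp (2 * pi * \<i> * of_nat (x k) / of_nat (m k))"

text \<open>Vilenkin character psi_n; digits n_k vanish for k \<ge> n since M_k \<ge> 2^k > n.\<close>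
definition vil_psi :: "(nat \<Rightarrow> nat) \<Rightarrow> nat \<Rightarrow> (nat \<Rightarrow> nat) \<Rightarrow> complex" where
  "vil_psi m n x = (\<Prod>k<n. vil_r m k x ^ vil_digit m n k)"

definition vil_D :: "(nat \<Rightarrow> nat) \<Rightarrow> nat \<Rightarrow> (nat \<Rightarrow> nat) \<Rightarrow> complex" where
  "vil_D m n x = (\<Sum>k<n. vil_psi m k x)"

definition vil_fourier :: "(nat \<Rightarrow> nat) \<Rightarrow> ((nat \<Rightarrow> nat) \<Rightarrow> complex) \<Rightarrow> nat \<Rightarrow> complex" where
  "vil_fourier m f i = integral\<^sup>L (vil_measure m) (\<lambda>x. f x * cnj (vil_psi m i x))"

definition vil_S :: "(nat \<Rightarrow> nat) \<Rightarrow> nat \<Rightarrow> ((nat \<Rightarrow> nat) \<Rightarrow> complex) \<Rightarrow> (nat \<Rightarrow> nat) \<Rightarrow> complex" where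
  "vil_S m n f x = (\<Sum>k<n. vil_fourier m f k * vil_psi m k x)"

definition vil_sigma :: "(nat \<Rightarrow> nat) \<Rightarrow> nat \<Rightarrow> ((nat \<Rightarrow> nat) \<Rightarrow> complex) \<Rightarrow> (nat \<Rightarrow> nat) \<Rightarrow> complex" where
  "vil_sigma m n f x = (\<Sum>k<n. vil_S m k f x) / of_nat n"

end

theory Submission
  imports Defs
begin

text \<open>The Fourier coefficients of \<open>f\<close> form the indicator of \<open>[M_{2A}, M_{2A+1})\<close> and
  \<open>q_A < M_{2A+1}\<close>, so \<open>q_A \<sigma>_{q_A} f = r_{2A} \<cdot> \<Sum>_{j<Q} (Q - 1 - j) \<psi>_j\<close> with
  \<open>Q = q_A - M_{2A}\<close>. Let \<open>E_k\<close> be the set of points whose first nonzero coordinates are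
  \<open>x_{2k}\<close> and \<open>x_{2k+1}\<close>. On \<open>E_k\<close> the characters \<open>\<psi>_j\<close>, \<open>j < M_{2k}\<close>, equal \<open>1\<close>,
  and every complete block of \<open>M_{2k+2}\<close> consecutive terms of the kernel sum cancels, since
  the powers of the nontrivial roots of unity \<open>r_{2k}(x)\<close> and \<open>r_{2k+1}(x)\<close> sum to zero.
  What remains has modulus at least \<open>M_{2k}\<^sup>2/4\<close>. The sets \<open>E_k\<close>, \<open>1 \<le> k < A\<close>, are
  disjoint with \<open>\<mu>(E_k) \<ge> 1/(4 M_{2k})\<close>, so each contributes at least \<open>1/(8 \<surd>q_A)\<close> to
  the integral, and \<open>q_A \<le> 4 M_{2A}\<close>.\<close>

section \<open>Digits and characters\<close>

lemma vilM_Suc: "vilM m (Suc k) = vilM m k * m k"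
  by (simp add: vilM_def)

lemma vilM_dvd: "k \<le> n \<Longrightarrow> vilM m k dvd vilM m n"
proof (induction n)
  case (Suc n)
  then show ?case
    by (cases "k = Suc n") (auto simp: vilM_Suc)
qed simp

locale vilenkin =
  fixes m :: "nat \<Rightarrow> nat"
  assumes m_ge_2: "\<And>k. 2 \<le> m k"
begin

abbreviation "M \<equiv> vilM m"
abbreviation "digit \<equiv> vil_digit m"
abbreviation "psi \<equiv> vil_psi m"
abbreviation "r \<equiv> vil_r m"

lemma m_pos: "0 < m k"
  using m_ge_2[of k] by simp

lemma vilM_pos: "0 < M k"
  by (simp add: vilM_def m_pos)

lemma two_power_le_vilM: "2 ^ k \<le> M k"
proof (induction k)
  case (Suc k)
  have "(2::nat) ^ Suc k = 2 ^ k * 2" by simp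
  also have "\<dots> \<le> M k * m k" using Suc m_ge_2[of k] by (intro mult_mono) auto
  finally show ?case by (simp add: vilM_Suc)
qed (simp add: vilM_def)

lemma less_vilM: "k < M k"
  using two_power_le_vilM[of k] less_exp[of k] by linarith

lemma vilM_mono: "k \<le> n \<Longrightarrow> M k \<le> M n"
  using vilM_dvd vilM_pos by (simp add: dvd_imp_le)

lemma vilM_Suc_Suc: "M (Suc (Suc k)) = M k * (m k * m (Suc k))"
  by (simp add: vilM_Suc)

lemma four_vilM_le: "4 * M k \<le> M (Suc (Suc k))"
proof -
  have "2 * 2 \<le> m k * m (Suc k)" using m_ge_2[of k] m_ge_2[of "Suc k"] by (rule mult_le_mono)
  then show ?thesis unfolding vilM_Suc_Suc by (simp add: mult.commute)
qed

lemma vil_digit_eq_0: "n < M k \<Longrightarrow> digit n k = 0"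
  by (simp add: vil_digit_def)

lemma vil_digit_less: "digit n k < m k"
  by (simp add: vil_digit_def m_pos)

lemma vil_psi_eq_prod: "n < M N \<Longrightarrow> psi n x = (\<Prod>k<N. r k x ^ digit n k)"
proof -
  assume n: "n < M N"
  have "psi n x = (\<Prod>k<max n N. r k x ^ digit n k)"
    unfolding vil_psi_def
  proof (rule prod.mono_neutral_left)
    show "\<forall>i\<in>{..<max n N} - {..<n}. r i x ^ digit n i = 1"
    proof
      fix i assume "i \<in> {..<max n N} - {..<n}"
      then have "n < M i" using less_vilM[of n] vilM_mono[of n i] by auto
      then show "r i x ^ digit n i = 1" by (simp add: vil_digit_eq_0)
    qed
  qed auto
  also have "\<dots> = (\<Prod>k<N. r k x ^ digit n k)"
  proof (rule prod.mono_neutral_right)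
    show "\<forall>i\<in>{..<max n N} - {..<N}. r i x ^ digit n i = 1"
    proof
      fix i assume "i \<in> {..<max n N} - {..<N}"
      then have "n < M i" using n vilM_mono[of N i] by auto
      then show "r i x ^ digit n i = 1" by (simp add: vil_digit_eq_0)
    qed
  qed auto
  finally show ?thesis .
qed

lemma vil_digit_add_mult_low:
  assumes "k < n"
  shows "digit (a + M n * b) k = digit a k"
proof -
  have "M (Suc k) dvd M n" using assms by (intro vilM_dvd) simp
  then obtain R where R: "M n = M k * m k * R" by (auto simp: vilM_Suc)
  have "(a + M n * b) div M k = a div M k + m k * (R * b)"
    using vilM_pos[of k] by (simp add: R mult.assoc)
  then show ?thesis by (simp add: vil_digit_def)
qed

lemma vil_digit_add_mult_high:
  assumes "n \<le> k" "a < M n"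
  shows "digit (a + M n * b) k = digit (M n * b) k"
proof -
  obtain R where R: "M k = M n * R" using vilM_dvd[OF assms(1)] by auto
  have "(a + M n * b) div M k = b div R" "(M n * b) div M k = b div R"
    using vilM_pos[of n] assms(2) by (simp_all add: R div_mult2_eq)
  then show ?thesis by (simp add: vil_digit_def)
qed

lemma vil_psi_add_mult:
  assumes "a < M n"
  shows "psi (a + M n * b) x = psi a x * psi (M n * b) x"
proof -
  define N where "N = Suc (a + M n * b)"
  have lt: "a + M n * b < M N" using less_vilM[of N] by (simp add: N_def)
  have "psi (a + M n * b) x = (\<Prod>k<N. r k x ^ digit (a + M n * b) k)"
    by (rule vil_psi_eq_prod[OF lt])
  also have "\<dots> = (\<Prod>k<N. r k x ^ digit a k * r k x ^ digit (M n * b) k)"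
  proof (rule prod.cong[OF refl])
    fix k
    show "r k x ^ digit (a + M n * b) k = r k x ^ digit a k * r k x ^ digit (M n * b) k"
    proof (cases "k < n")
      case True
      then show ?thesis
        using vil_digit_add_mult_low[OF True, of a b] vil_digit_add_mult_low[OF True, of 0 b]
        by (simp add: vil_digit_eq_0 vilM_pos)
    next
      case False
      then have "a < M k" using assms vilM_mono[of n k] by simp
      then show ?thesis using vil_digit_add_mult_high[of n k a b] False assms
        by (simp add: vil_digit_eq_0)
    qed
  qed
  also have "\<dots> = psi a x * psi (M n * b) x"
    using lt by (simp add: prod.distrib vil_psi_eq_prod[of a N] vil_psi_eq_prod[of "M n * b" N])
  finally show ?thesis .
qed

lemma vil_psi_vilM_mult:
  assumes "b < m n"
  shows "psi (M n * b) x = r n x ^ b"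
proof -
  have lt: "M n * b < M (Suc n)" using assms vilM_pos[of n] by (simp add: vilM_Suc)
  have "\<And>k. k < n \<Longrightarrow> digit (M n * b) k = 0"
    using vil_digit_add_mult_low[of _ n 0 b] by (simp add: vil_digit_eq_0 vilM_pos)
  moreover have "digit (M n * b) n = b"
    using assms vilM_pos[of n] by (simp add: vil_digit_def)
  ultimately show ?thesis
    by (simp add: vil_psi_eq_prod[OF lt] prod.lessThan_Suc)
qed

lemma vil_psi_vilM: "psi (M n) x = r n x"
  using vil_psi_vilM_mult[of 1 n x] m_ge_2[of n] by simp

lemma vil_psi_eq_1:
  assumes "a < M n" "\<And>t. t < n \<Longrightarrow> x t = 0"
  shows "psi a x = 1"
  using assms by (simp add: vil_psi_eq_prod[OF assms(1)] vil_r_def)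

lemma norm_vil_r [simp]: "norm (r k x) = 1"
  unfolding vil_r_def by (simp add: norm_exp_eq_Re)

lemma norm_vil_psi [simp]: "norm (psi n x) = 1"
  unfolding vil_psi_def by (simp add: prod_norm[symmetric] norm_power)

lemma mod_vilM_eq_if_digits_eq:
  "(\<And>t. t < N \<Longrightarrow> digit i t = digit j t) \<Longrightarrow> i mod M N = j mod M N"
proof (induction N)
  case (Suc N)
  have "i mod M (Suc N) = M N * digit i N + i mod M N"
    "j mod M (Suc N) = M N * digit j N + j mod M N"
    by (simp_all add: vilM_Suc mod_mult2_eq vil_digit_def)
  with Suc show ?case by simp
qed (simp add: vilM_def)

end

section \<open>Orthonormality of the characters\<close>

lemma sum_powers_root_of_unity_eq_0:
  fixes k :: int and n :: nat
  assumes "0 < n" "\<not> int n dvd k"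
  shows "(\<Sum>y<n. exp (2 * pi * \<i> * of_int k / of_nat n) ^ y) = 0"
proof -
  define w where "w = exp (2 * pi * \<i> * of_int k / of_nat n)"
  have "w ^ n = exp (of_nat n * (2 * pi * \<i> * of_int k / of_nat n))"
    unfolding w_def by (rule exp_of_nat_mult[symmetric])
  also have "\<dots> = exp (2 * pi * \<i> * of_int k)" using assms(1) by simp
  also have "\<dots> = 1" by (simp add: exp_eq_1)
  finally have wn: "w ^ n = 1" .
  have "w \<noteq> 1"
  proof
    assume "w = 1"
    then obtain j :: int where "2 * pi * of_int k / of_nat n = of_int (2 * j) * pi"
      by (auto simp: w_def exp_eq_1)
    then have "of_int k = real n * of_int j" using assms(1) by (simp add: field_simps)
    then have "k = int n * j" by (metis of_int_eq_iff of_int_mult of_int_of_nat_eq)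
    then show False using assms(2) by simp
  qed
  with wn have "(\<Sum>y<n. w ^ y) = 0" by (simp add: sum_gp_strict)
  then show ?thesis unfolding w_def .
qed

lemma exp_power_mult_cnj_exp_power:
  fixes a b y n :: nat
  shows "exp (2 * pi * \<i> * of_nat y / of_nat n) ^ a * cnj (exp (2 * pi * \<i> * of_nat y / of_nat n) ^ b)
     = exp (2 * pi * \<i> * of_int (int a - int b) / of_nat n) ^ y"
proof -
  have "exp (2 * pi * \<i> * of_nat y / of_nat n) ^ a * cnj (exp (2 * pi * \<i> * of_nat y / of_nat n) ^ b)
     = exp (of_nat a * (2 * pi * \<i> * of_nat y / of_nat n) + of_nat b * cnj (2 * pi * \<i> * of_nat y / of_nat n))"
    by (simp only: exp_of_nat_mult[symmetric] complex_cnj_power[symmetric] exp_cnj exp_add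
         complex_cnj_power)
       (simp add: exp_of_nat_mult complex_cnj_power exp_cnj[symmetric])
  also have "\<dots> = exp (of_nat y * (2 * pi * \<i> * of_int (int a - int b) / of_nat n))"
    by (simp add: algebra_simps diff_divide_distrib)
  also have "\<dots> = exp (2 * pi * \<i> * of_int (int a - int b) / of_nat n) ^ y"
    by (rule exp_of_nat_mult)
  finally show ?thesis .
qed

lemma integral_uniform_count_measure_complex:
  fixes f :: "'a \<Rightarrow> complex"
  assumes "finite A"
  shows "integral\<^sup>L (uniform_count_measure A) f = (\<Sum>x\<in>A. f x) / of_nat (card A)"
  using assms
  by (simp add: uniform_count_measure_def lebesgue_integral_point_measure_finite
      scaleR_conv_of_real sum_divide_distrib)

lemma integral_uniform_exp_power_mult_cnj:
  fixes a b n :: nat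
  assumes "a < n" "b < n"
  shows "(\<integral>y. exp (2 * pi * \<i> * of_nat y / of_nat n) ^ a * cnj (exp (2 * pi * \<i> * of_nat y / of_nat n) ^ b)
           \<partial>uniform_count_measure {0..<n}) = (if a = b then 1 else 0)"
proof -
  have "(\<integral>y. exp (2 * pi * \<i> * of_nat y / of_nat n) ^ a * cnj (exp (2 * pi * \<i> * of_nat y / of_nat n) ^ b)
           \<partial>uniform_count_measure {0..<n})
     = (\<Sum>y<n. exp (2 * pi * \<i> * of_int (int a - int b) / of_nat n) ^ y) / of_nat n"
    by (subst integral_uniform_count_measure_complex)
       (simp_all only: finite_lessThan finite_atLeastLessThan exp_power_mult_cnj_exp_power atLeast0LessThan
         card_lessThan)
  also have "\<dots> = (if a = b then 1 else 0)"
  proof (cases "a = b")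
    case False
    with assms have "\<not> int n dvd (int a - int b)"
      by (metis mod_eq_dvd_iff of_nat_eq_iff of_nat_mod mod_less)
    then show ?thesis
      using sum_powers_root_of_unity_eq_0[of n "int a - int b"] assms False by simp
  qed (use assms in simp)
  finally show ?thesis .
qed

context vilenkin
begin

abbreviation "U t \<equiv> uniform_count_measure {0..<m t}"
abbreviation "\<mu> \<equiv> vil_measure m"

lemma prob_space_U: "prob_space (U t)"
  using m_pos[of t] by (intro prob_space_uniform_count_measure) auto

sublocale product_prob_space U UNIV
  by (intro product_prob_space.intro product_prob_space_axioms.intro
      product_sigma_finite.intro prob_space_U prob_space_imp_sigma_finite)

lemma vil_measure_eq: "\<mu> = PiM UNIV U"
  by (simp add: vil_measure_def)

lemma prob_space_vil_measure: "prob_space \<mu>"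
  unfolding vil_measure_eq by (rule P.prob_space_axioms)

lemma measurable_U [measurable]: "g \<in> borel_measurable (U t)"
  by (subst measurable_cong_sets[OF sets_uniform_count_measure_count_space refl])
     (rule borel_measurable_count_space)

lemma measurable_coordinate: "(\<lambda>x. g (x t)) \<in> borel_measurable (PiM J U)" if "t \<in> J"
  by (rule measurable_compose[OF measurable_component_singleton[OF that] measurable_U])

lemma measurable_vil_r_power: "(\<lambda>x. r k x ^ d) \<in> borel_measurable (PiM J U)" if "k \<in> J"
  unfolding vil_r_def by (rule measurable_coordinate[OF that])

lemma measurable_vil_psi [measurable]: "psi n \<in> borel_measurable \<mu>"
  unfolding vil_psi_def vil_measure_eq
  by (intro borel_measurable_prod measurable_vil_r_power) auto

lemma measurable_cnj_vil_psi [measurable]: "(\<lambda>x. cnj (psi n x)) \<in> borel_measurable \<mu>"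
  by (rule measurable_compose[OF measurable_vil_psi borel_measurable_continuous_onI])
     (intro continuous_intros)

lemma integrable_vil_psi_mult_cnj: "integrable \<mu> (\<lambda>x. psi j x * cnj (psi i x))"
proof -
  interpret prob_space \<mu> by (rule prob_space_vil_measure)
  show ?thesis
    by (rule integrable_const_bound[where B=1]) (auto simp: norm_mult)
qed

text \<open>Both characters depend only on the first \<open>N\<close> coordinates, so the integral reduces
  to a finite product of one-dimensional integrals.\<close>

lemma vil_psi_orthonormal: "(\<integral>x. psi j x * cnj (psi i x) \<partial>\<mu>) = (if i = j then 1 else 0)"
proof -
  define N where "N = Suc (i + j)"
  have iN: "i < M N" "j < M N" using less_vilM[of N] by (auto simp: N_def)
  define g where "g t y = exp (2 * pi * \<i> * of_nat y / of_nat (m t)) ^ digit j t *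
     cnj (exp (2 * pi * \<i> * of_nat y / of_nat (m t)) ^ digit i t)" for t y
  have eq: "psi j x * cnj (psi i x) = (\<Prod>t<N. g t (x t))" for x
    using vil_psi_eq_prod[OF iN(1)] vil_psi_eq_prod[OF iN(2)]
    by (simp add: g_def vil_r_def prod.distrib)
  have g_meas: "(\<lambda>z. \<Prod>t<N. g t (z t)) \<in> borel_measurable (PiM {..<N} U)"
    by (intro borel_measurable_prod measurable_coordinate) auto
  have "(\<integral>x. psi j x * cnj (psi i x) \<partial>\<mu>) = (\<integral>x. (\<Prod>t<N. g t (restrict x {..<N} t)) \<partial>\<mu>)"
    by (simp add: eq)
  also have "\<dots> = (\<integral>z. (\<Prod>t<N. g t (z t)) \<partial>(distr \<mu> (PiM {..<N} U) (\<lambda>x. restrict x {..<N})))"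
    unfolding vil_measure_eq
    by (rule integral_distr[OF measurable_restrict_subset g_meas, symmetric]) simp
  also have "distr \<mu> (PiM {..<N} U) (\<lambda>x. restrict x {..<N}) = PiM {..<N} U"
    unfolding vil_measure_eq by (rule distr_PiM_restrict_finite) auto
  also have "(\<integral>z. (\<Prod>t<N. g t (z t)) \<partial>PiM {..<N} U) = (\<Prod>t<N. integral\<^sup>L (U t) (g t))"
  proof (rule product_integral_prod)
    show "integrable (U t) (g t)" for t
      by (rule M.integrable_const_bound[where B=1])
         (auto simp: g_def norm_mult norm_power norm_exp_eq_Re)
  qed auto
  also have "\<dots> = (\<Prod>t<N. if digit j t = digit i t then 1 else 0)"
    unfolding g_def
    by (intro prod.cong refl integral_uniform_exp_power_mult_cnj vil_digit_less)
  also have "\<dots> = (if i = j then 1 else 0)"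
  proof (cases "i = j")
    case False
    have "\<exists>t<N. digit j t \<noteq> digit i t"
    proof (rule ccontr)
      assume "\<not> ?thesis"
      then have "i mod M N = j mod M N" by (intro mod_vilM_eq_if_digits_eq) auto
      then show False using iN False by simp
    qed
    then show ?thesis using False by (auto intro!: prod_zero)
  qed simp
  finally show ?thesis .
qed

end

section \<open>The Fej\'er means of the test function\<close>

lemma sum_lessThan_add: "(\<Sum>i<a + b. h i) = (\<Sum>i<a. h i) + (\<Sum>j<b. h (a + j))"
  for h :: "nat \<Rightarrow> 'a::comm_monoid_add"
  by (induction b) (simp_all add: add.assoc)

lemma sum_lessThan_mult_blocks: "(\<Sum>j<p * N. g j) = (\<Sum>b<N. \<Sum>a<p. g (a + p * b))"
  for g :: "nat \<Rightarrow> 'a::comm_monoid_add"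
proof (induction N)
  case (Suc N)
  have "(\<Sum>j<p * Suc N. g j) = (\<Sum>j<p * N + p. g j)" by (simp add: add.commute)
  also have "\<dots> = (\<Sum>j<p * N. g j) + (\<Sum>a<p. g (p * N + a))" by (rule sum_lessThan_add)
  finally show ?case using Suc by (simp add: add.commute)
qed simp

lemma sum_partial_sums_lessThan: "(\<Sum>k<q. \<Sum>i<k. h i) = (\<Sum>i<q. of_nat (q - 1 - i) * h i)"
  for h :: "nat \<Rightarrow> 'a::comm_ring_1"
proof (induction q)
  case (Suc q)
  have "(\<Sum>k<Suc q. \<Sum>i<k. h i) = (\<Sum>i<q. of_nat (q - 1 - i) * h i) + (\<Sum>i<q. h i)"
    using Suc by simp
  also have "\<dots> = (\<Sum>i<q. of_nat (q - i) * h i)"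
    by (subst sum.distrib[symmetric], rule sum.cong[OF refl])
       (auto simp: algebra_simps of_nat_diff Suc_diff_Suc)
  finally show ?case by simp
qed simp

context vilenkin
begin

text \<open>\<open>fejer_sum Q = \<Sum>_{k<Q} D_k\<close>, i.e. \<open>Q\<close> times the Fej\'er kernel \<open>K_Q\<close>.\<close>

definition fejer_sum :: "nat \<Rightarrow> (nat \<Rightarrow> nat) \<Rightarrow> complex" where
  "fejer_sum Q x = (\<Sum>j<Q. of_nat (Q - 1 - j) * psi j x)"

definition qsum :: "nat \<Rightarrow> nat" where
  "qsum n = (\<Sum>i<n. M (2 * i))"

lemma qsum_less_vilM: "qsum n < M (2 * n)"
proof (induction n)
  case (Suc n)
  have "qsum (Suc n) = qsum n + M (2 * n)" by (simp add: qsum_def)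
  also have "\<dots> < 4 * M (2 * n)" using Suc by simp
  also have "\<dots> \<le> M (2 * Suc n)" using four_vilM_le[of "2 * n"] by simp
  finally show ?case .
qed (simp add: qsum_def vilM_def)

lemma vil_fourier_vil_D_diff:
  "vil_fourier m (\<lambda>x. vil_D m a x - vil_D m b x) i = of_bool (i < a) - of_bool (i < b)"
proof -
  have "vil_fourier m (\<lambda>x. vil_D m a x - vil_D m b x) i =
     (\<integral>x. (\<Sum>j<a. psi j x * cnj (psi i x)) - (\<Sum>j<b. psi j x * cnj (psi i x)) \<partial>\<mu>)"
    unfolding vil_fourier_def vil_D_def by (simp add: left_diff_distrib sum_distrib_right)
  also have "\<dots> = (\<Sum>j<a. \<integral>x. psi j x * cnj (psi i x) \<partial>\<mu>) - (\<Sum>j<b. \<integral>x. psi j x * cnj (psi i x) \<partial>\<mu>)"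
    by (simp add: integral_diff integral_sum integrable_vil_psi_mult_cnj)
  also have "\<dots> = of_bool (i < a) - of_bool (i < b)"
    by (simp add: vil_psi_orthonormal)
  finally show ?thesis .
qed

lemma vil_sigma_test_function:
  "vil_sigma m (qsum (Suc A)) (\<lambda>x. vil_D m (M (2 * A + 1)) x - vil_D m (M (2 * A)) x) x
     = r (2 * A) x * fejer_sum (qsum A) x / of_nat (qsum (Suc A))"
proof -
  define f where "f = (\<lambda>x. vil_D m (M (2 * A + 1)) x - vil_D m (M (2 * A)) x)"
  define q where "q = qsum (Suc A)"
  define M0 where "M0 = M (2 * A)"
  have q: "q = M0 + qsum A" by (simp add: q_def qsum_def M0_def)
  have QA: "qsum A < M0" unfolding M0_def by (rule qsum_less_vilM)
  have "q < 2 * M0" using q QA by simp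
  also have "\<dots> \<le> M0 * m (2 * A)" using m_ge_2[of "2 * A"] by (simp add: mult.commute)
  finally have q_less: "q < M (2 * A + 1)" by (simp add: M0_def vilM_Suc)
  have M0_le: "M0 \<le> M (2 * A + 1)" unfolding M0_def by (rule vilM_mono) simp
  have fourier: "vil_fourier m f i = of_bool (i < M (2 * A + 1)) - of_bool (i < M0)" for i
    unfolding f_def M0_def by (rule vil_fourier_vil_D_diff)
  have "(\<Sum>k<q. vil_S m k f x) = (\<Sum>i<q. of_nat (q - 1 - i) * (vil_fourier m f i * psi i x))"
    unfolding vil_S_def by (rule sum_partial_sums_lessThan)
  also have "\<dots> = (\<Sum>i<M0. of_nat (q - 1 - i) * (vil_fourier m f i * psi i x))
      + (\<Sum>j<qsum A. of_nat (q - 1 - (M0 + j)) * (vil_fourier m f (M0 + j) * psi (M0 + j) x))"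
    unfolding q by (rule sum_lessThan_add)
  also have "(\<Sum>i<M0. of_nat (q - 1 - i) * (vil_fourier m f i * psi i x)) = 0"
    using M0_le by (intro sum.neutral) (auto simp: fourier)
  also have "(\<Sum>j<qsum A. of_nat (q - 1 - (M0 + j)) * (vil_fourier m f (M0 + j) * psi (M0 + j) x))
      = r (2 * A) x * fejer_sum (qsum A) x"
    unfolding fejer_sum_def sum_distrib_left
  proof (rule sum.cong[OF refl])
    fix j assume "j \<in> {..<qsum A}"
    then have j: "j < qsum A" by simp
    have "M0 + j < M (2 * A + 1)" using j q q_less by simp
    then have "vil_fourier m f (M0 + j) = 1" by (simp add: fourier)
    moreover have "psi (M0 + j) x = psi j x * r (2 * A) x"
      using vil_psi_add_mult[of j "2 * A" 1 x] j QA by (simp add: M0_def vil_psi_vilM add.commute)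
    moreover have "q - 1 - (M0 + j) = qsum A - 1 - j" using q by simp
    ultimately show "of_nat (q - 1 - (M0 + j)) * (vil_fourier m f (M0 + j) * psi (M0 + j) x) =
        r (2 * A) x * (of_nat (qsum A - 1 - j) * psi j x)"
      by simp
  qed
  finally show ?thesis by (simp add: vil_sigma_def q_def f_def)
qed

end

section \<open>The kernel on the sets \<open>E_k\<close>\<close>

lemma double_sum_lessThan: "2 * (\<Sum>j<p. j) = p * (p - 1 :: nat)"
proof (induction p)
  case (Suc p)
  then show ?case by (cases p) (simp_all add: algebra_simps)
qed simp

lemma square_add_weight_sum_le:
  fixes p Q :: nat
  assumes "Q < p" "2 \<le> p"
  shows "p ^ 2 + 4 * (\<Sum>j<Q. Q - 1 - j) \<le> 4 * (\<Sum>j<p. p + Q - 1 - j)"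
proof -
  have "(\<Sum>j<p. p + Q - 1 - j) = (\<Sum>j<p. Q + (p - Suc j))" by (rule sum.cong) auto
  also have "\<dots> = p * Q + (\<Sum>j<p. p - Suc j)" by (subst sum.distrib) simp
  also have "(\<Sum>j<p. p - Suc j) = (\<Sum>j<p. j)" using sum.nat_diff_reindex[of "\<lambda>j. j" p] by simp
  finally have R1: "(\<Sum>j<p. p + Q - 1 - j) = p * Q + (\<Sum>j<p. j)" .
  have "(\<Sum>j<Q. Q - 1 - j) \<le> (\<Sum>j<Q. Q)" by (rule sum_mono) auto
  also have "\<dots> \<le> p * Q" using assms(1) by simp
  finally have R2: "(\<Sum>j<Q. Q - 1 - j) \<le> p * Q" .
  have "p \<le> 2 * (p - 1)" using assms(2) by simp
  then have "p * p \<le> p * (2 * (p - 1))" by (rule mult_le_mono2)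
  then have "p ^ 2 \<le> 2 * (p * (p - 1))" by (simp add: power2_eq_square mult.left_commute)
  then show ?thesis using R1 R2 double_sum_lessThan[of p] by linarith
qed

text \<open>Summing over \<open>a\<close> turns the weight into an affine function of \<open>b\<close> and \<open>c\<close>;
  the part constant in \<open>b\<close> is killed by the \<open>\<rho>\<close>-sum, the rest by the \<open>\<tau>\<close>-sum.\<close>

lemma sum_affine_weight_geometric_eq_0:
  fixes K \<rho> \<tau> :: complex and p n n' :: nat
  assumes \<rho>: "(\<Sum>b<n. \<rho> ^ b) = 0" and \<tau>: "(\<Sum>c<n'. \<tau> ^ c) = 0"
  shows "(\<Sum>c<n'. \<Sum>b<n. \<Sum>a<p. (K - of_nat (a + p * (b + n * c))) * (\<rho> ^ b * \<tau> ^ c)) = 0"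
proof -
  define S where "S = (\<Sum>a<p. of_nat a :: complex)"
  define T where "T = (\<Sum>b<n. of_nat b * \<rho> ^ b)"
  have inner: "(\<Sum>a<p. (K - of_nat (a + p * (b + n * c))) * (\<rho> ^ b * \<tau> ^ c)) =
      ((of_nat p * K - S - of_nat (p * p * n * c)) * \<rho> ^ b - of_nat (p * p) * (of_nat b * \<rho> ^ b)) * \<tau> ^ c"
    for b c
  proof -
    have "(\<Sum>a<p. (K - of_nat (a + p * (b + n * c))) * (\<rho> ^ b * \<tau> ^ c)) =
        (\<Sum>a<p. K - of_nat (a + p * (b + n * c))) * (\<rho> ^ b * \<tau> ^ c)"
      by (simp only: sum_distrib_right)
    also have "(\<Sum>a<p. K - of_nat (a + p * (b + n * c))) = (\<Sum>a<p. (K - of_nat (p * (b + n * c))) - of_nat a)"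
      by (rule sum.cong) (simp_all add: algebra_simps)
    also have "\<dots> = of_nat p * (K - of_nat (p * (b + n * c))) - S"
      by (simp add: sum_subtractf S_def)
    finally show ?thesis by (simp add: algebra_simps)
  qed
  have middle: "(\<Sum>b<n. \<Sum>a<p. (K - of_nat (a + p * (b + n * c))) * (\<rho> ^ b * \<tau> ^ c))
      = - (of_nat (p * p) * T) * \<tau> ^ c" for c
  proof -
    have "(\<Sum>b<n. \<Sum>a<p. (K - of_nat (a + p * (b + n * c))) * (\<rho> ^ b * \<tau> ^ c)) =
      (\<Sum>b<n. ((of_nat p * K - S - of_nat (p * p * n * c)) * \<rho> ^ b
                 - of_nat (p * p) * (of_nat b * \<rho> ^ b)) * \<tau> ^ c)"
      by (rule sum.cong[OF refl], rule inner)
    also have "\<dots> = ((of_nat p * K - S - of_nat (p * p * n * c)) * (\<Sum>b<n. \<rho> ^ b)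
                     - of_nat (p * p) * T) * \<tau> ^ c"
      by (simp add: T_def sum_distrib_left sum_distrib_right sum_subtractf sum.distrib algebra_simps)
    finally show ?thesis using \<rho> by simp
  qed
  have "(\<Sum>c<n'. \<Sum>b<n. \<Sum>a<p. (K - of_nat (a + p * (b + n * c))) * (\<rho> ^ b * \<tau> ^ c))
     = - (of_nat (p * p) * T) * (\<Sum>c<n'. \<tau> ^ c)"
    by (simp only: middle sum_distrib_left)
  then show ?thesis using \<tau> by simp
qed

context vilenkin
begin

definition E_set :: "nat \<Rightarrow> (nat \<Rightarrow> nat) set" where
  "E_set k = {x. (\<forall>i. x i < m i) \<and> (\<forall>i<2 * k. x i = 0) \<and> x (2 * k) \<noteq> 0 \<and> x (Suc (2 * k)) \<noteq> 0}"

lemma sum_powers_vil_r_eq_0: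
  assumes "x n \<noteq> 0" "x n < m n"
  shows "(\<Sum>b<m n. r n x ^ b) = 0"
proof -
  have "\<not> int (m n) dvd int (x n)"
    using assms by (auto dest: dvd_imp_le)
  then show ?thesis
    using sum_powers_root_of_unity_eq_0[of "m n" "int (x n)"] by (simp add: vil_r_def m_pos)
qed

lemma sum_block_eq_0:
  assumes x: "x \<in> E_set k"
  shows "(\<Sum>a<M (2 * k + 2). (K - of_nat a) * psi a x) = 0"
proof -
  define p where "p = M (2 * k)"
  define n where "n = m (2 * k)"
  define n' where "n' = m (Suc (2 * k))"
  define \<rho> where "\<rho> = r (2 * k) x"
  define \<tau> where "\<tau> = r (Suc (2 * k)) x"
  have psi_eq: "psi (a + p * (b + n * c)) x = \<rho> ^ b * \<tau> ^ c" if "a < p" "b < n" "c < n'" for a b c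
  proof -
    have "psi (a + p * (b + n * c)) x = psi a x * psi (p * b + M (Suc (2 * k)) * c) x"
      using vil_psi_add_mult[of a "2 * k" "b + n * c" x] that
      by (simp add: p_def n_def vilM_Suc algebra_simps)
    also have "psi a x = 1"
      using that x unfolding p_def by (intro vil_psi_eq_1) (auto simp: E_set_def)
    also have "psi (p * b + M (Suc (2 * k)) * c) x = psi (p * b) x * psi (M (Suc (2 * k)) * c) x"
      using that vilM_pos[of "2 * k"] by (intro vil_psi_add_mult) (simp add: p_def n_def vilM_Suc)
    finally show ?thesis
      using that by (simp add: p_def \<rho>_def \<tau>_def n_def n'_def vil_psi_vilM_mult)
  qed
  have "M (2 * k + 2) = p * (n * n')" using vilM_Suc_Suc[of "2 * k"] by (simp add: p_def n_def n'_def)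
  then have "(\<Sum>a<M (2 * k + 2). (K - of_nat a) * psi a x) =
     (\<Sum>u<n * n'. \<Sum>a<p. (K - of_nat (a + p * u)) * psi (a + p * u) x)"
    by (simp only: sum_lessThan_mult_blocks)
  also have "\<dots> =
     (\<Sum>c<n'. \<Sum>b<n. \<Sum>a<p. (K - of_nat (a + p * (b + n * c))) * psi (a + p * (b + n * c)) x)"
    by (rule sum_lessThan_mult_blocks)
  also have "\<dots> = (\<Sum>c<n'. \<Sum>b<n. \<Sum>a<p. (K - of_nat (a + p * (b + n * c))) * (\<rho> ^ b * \<tau> ^ c))"
    by (intro sum.cong refl) (simp add: psi_eq)
  also have "\<dots> = 0"
    using x sum_powers_vil_r_eq_0[of x "2 * k"] sum_powers_vil_r_eq_0[of x "Suc (2 * k)"]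
    by (intro sum_affine_weight_geometric_eq_0) (auto simp: E_set_def \<rho>_def \<tau>_def n_def n'_def)
  finally show ?thesis .
qed

lemma fejer_sum_add_blocks:
  assumes x: "x \<in> E_set k" and Q: "Q < M (2 * k + 2)"
  shows "fejer_sum (M (2 * k + 2) * P + Q) x = psi (M (2 * k + 2) * P) x * fejer_sum Q x"
proof -
  define L where "L = M (2 * k + 2)"
  have split: "fejer_sum (L * P + Q) x = (\<Sum>j<L * P. of_nat (L * P + Q - 1 - j) * psi j x)
      + (\<Sum>j<Q. of_nat (L * P + Q - 1 - (L * P + j)) * psi (L * P + j) x)"
    unfolding fejer_sum_def by (rule sum_lessThan_add)
  have block: "(\<Sum>a<L. of_nat (L * P + Q - 1 - (a + L * h)) * psi (a + L * h) x) =
      psi (L * h) x * (\<Sum>a<L. (of_nat (L * P + Q - 1 - L * h) - of_nat a) * psi a x)"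
    if "h < P" for h
    unfolding sum_distrib_left
  proof (rule sum.cong[OF refl])
    fix a assume "a \<in> {..<L}"
    then have a: "a < L" by simp
    have "L * Suc h \<le> L * P" using that by (intro mult_le_mono2) simp
    then have "(of_nat (L * P + Q - 1 - (a + L * h)) :: complex) = of_nat (L * P + Q - 1 - L * h) - of_nat a"
      using a by (simp add: of_nat_diff[symmetric])
    moreover have "psi (a + L * h) x = psi a x * psi (L * h) x"
      using a unfolding L_def by (rule vil_psi_add_mult)
    ultimately show "of_nat (L * P + Q - 1 - (a + L * h)) * psi (a + L * h) x =
        psi (L * h) x * ((of_nat (L * P + Q - 1 - L * h) - of_nat a) * psi a x)"
      by simp
  qed
  have "(\<Sum>j<L * P. of_nat (L * P + Q - 1 - j) * psi j x)
     = (\<Sum>h<P. \<Sum>a<L. of_nat (L * P + Q - 1 - (a + L * h)) * psi (a + L * h) x)"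
    by (rule sum_lessThan_mult_blocks)
  also have "\<dots> = (\<Sum>h<P. psi (L * h) x * (\<Sum>a<L. (of_nat (L * P + Q - 1 - L * h) - of_nat a) * psi a x))"
    by (intro sum.cong refl block) simp
  also have "\<dots> = 0"
    using sum_block_eq_0[OF x] by (simp add: L_def)
  finally have first: "(\<Sum>j<L * P. of_nat (L * P + Q - 1 - j) * psi j x) = 0" .
  have "(\<Sum>j<Q. of_nat (L * P + Q - 1 - (L * P + j)) * psi (L * P + j) x)
     = (\<Sum>j<Q. psi (L * P) x * (of_nat (Q - 1 - j) * psi j x))"
  proof (rule sum.cong[OF refl])
    fix j assume "j \<in> {..<Q}"
    then have "j < L" using Q by (simp add: L_def)
    then have "psi (j + L * P) x = psi j x * psi (L * P) x" unfolding L_def by (rule vil_psi_add_mult)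
    then show "of_nat (L * P + Q - 1 - (L * P + j)) * psi (L * P + j) x
        = psi (L * P) x * (of_nat (Q - 1 - j) * psi j x)"
      by (simp add: add.commute)
  qed
  then show ?thesis using split first by (simp add: fejer_sum_def sum_distrib_left L_def)
qed

text \<open>On \<open>E_k\<close>, \<open>fejer_sum (qsum (Suc k)) = R_1 + r_{2k} R_2\<close> with naturals
  \<open>R_1 \<ge> M_{2k}\<^sup>2/4 + R_2\<close>.\<close>

lemma norm_fejer_sum_qsum_Suc_ge:
  assumes x: "x \<in> E_set k" and k: "1 \<le> k"
  shows "real (M (2 * k))^2 / 4 \<le> norm (fejer_sum (qsum (Suc k)) x)"
proof -
  define p where "p = M (2 * k)"
  define Q where "Q = qsum k"
  define R1 where "R1 = (\<Sum>j<p. p + Q - 1 - j)"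
  define R2 where "R2 = (\<Sum>j<Q. Q - 1 - j)"
  have Q_less: "Q < p" unfolding p_def Q_def by (rule qsum_less_vilM)
  have "(2::nat) ^ 1 \<le> 2 ^ (2 * k)" using k by (intro power_increasing) auto
  then have p2: "2 \<le> p" using two_power_le_vilM[of "2 * k"] by (simp add: p_def)
  have one: "psi j x = 1" if "j < p" for j
    using that x unfolding p_def by (intro vil_psi_eq_1) (auto simp: E_set_def)
  have "fejer_sum (p + Q) x = (\<Sum>j<p. of_nat (p + Q - 1 - j) * psi j x)
      + (\<Sum>j<Q. of_nat (p + Q - 1 - (p + j)) * psi (p + j) x)"
    unfolding fejer_sum_def by (rule sum_lessThan_add)
  also have "(\<Sum>j<p. of_nat (p + Q - 1 - j) * psi j x) = (of_nat R1 :: complex)"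
    unfolding R1_def of_nat_sum by (rule sum.cong[OF refl]) (simp add: one)
  also have "(\<Sum>j<Q. of_nat (p + Q - 1 - (p + j)) * psi (p + j) x) = r (2 * k) x * of_nat R2"
    unfolding R2_def of_nat_sum sum_distrib_left
  proof (rule sum.cong[OF refl])
    fix j assume "j \<in> {..<Q}"
    then have j: "j < p" using Q_less by simp
    have "psi (j + M (2 * k) * 1) x = psi j x * psi (M (2 * k) * 1) x"
      using j unfolding p_def by (rule vil_psi_add_mult)
    then show "of_nat (p + Q - 1 - (p + j)) * psi (p + j) x = r (2 * k) x * of_nat (Q - 1 - j)"
      using one[OF j] by (simp add: p_def vil_psi_vilM add.commute)
  qed
  finally have fejer: "fejer_sum (qsum (Suc k)) x = of_nat R1 + r (2 * k) x * of_nat R2"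
    by (simp add: qsum_def p_def Q_def add.commute)
  have "p ^ 2 + 4 * R2 \<le> 4 * R1"
    unfolding R1_def R2_def using Q_less p2 by (rule square_add_weight_sum_le)
  then have "real p ^ 2 / 4 \<le> real R1 - real R2"
    by (simp add: of_nat_le_iff[symmetric, where 'a=real])
  also have "\<dots> \<le> norm (fejer_sum (qsum (Suc k)) x)"
    using norm_diff_ineq[of "of_nat R1 :: complex" "r (2 * k) x * of_nat R2"]
    by (simp add: fejer norm_mult)
  finally show ?thesis by (simp add: p_def)
qed

lemma norm_fejer_sum_qsum_ge:
  assumes x: "x \<in> E_set k" and "1 \<le> k" "k < A"
  shows "real (M (2 * k))^2 / 4 \<le> norm (fejer_sum (qsum A) x)"
proof -
  have "qsum A = qsum (Suc k) + (\<Sum>i\<in>{Suc k..<A}. M (2 * i))"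
    unfolding qsum_def using sum.atLeastLessThan_concat[of 0 "Suc k" A "\<lambda>i. M (2 * i)"] assms
    by (simp add: atLeast0LessThan)
  moreover have "M (2 * k + 2) dvd (\<Sum>i\<in>{Suc k..<A}. M (2 * i))"
    by (intro dvd_sum vilM_dvd) auto
  ultimately obtain P where P: "qsum A = M (2 * k + 2) * P + qsum (Suc k)"
    by (auto elim!: dvdE)
  have "qsum (Suc k) < M (2 * k + 2)" using qsum_less_vilM[of "Suc k"] by simp
  then have "fejer_sum (qsum A) x = psi (M (2 * k + 2) * P) x * fejer_sum (qsum (Suc k)) x"
    unfolding P by (rule fejer_sum_add_blocks[OF x])
  then show ?thesis using norm_fejer_sum_qsum_Suc_ge[OF x assms(2)] by (simp add: norm_mult)
qed

end

section \<open>Integrating over the sets \<open>E_k\<close>\<close>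

lemma (in finite_measure) sum_measure_le_integral:
  fixes g :: "'a \<Rightarrow> real"
  assumes g: "integrable M g" "\<And>x. 0 \<le> g x"
    and E: "finite I" "disjoint_family_on E I" "\<And>i. i \<in> I \<Longrightarrow> E i \<in> sets M"
    and lower: "\<And>i x. i \<in> I \<Longrightarrow> x \<in> E i \<Longrightarrow> c i \<le> g x"
  shows "(\<Sum>i\<in>I. c i * measure M (E i)) \<le> integral\<^sup>L M g"
proof -
  define h where "h x = (\<Sum>i\<in>I. c i * indicator (E i) x)" for x
  have integral_h: "integral\<^sup>L M h = (\<Sum>i\<in>I. c i * measure M (E i))"
    unfolding h_def using E
    by (subst Bochner_Integration.integral_sum) (auto simp: emeasure_eq_measure)
  have "h x \<le> g x" for x
  proof (cases "\<exists>i\<in>I. x \<in> E i")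
    case True
    then obtain i where i: "i \<in> I" "x \<in> E i" by blast
    have "indicator (E j) x = (if j = i then 1 else 0 :: real)" if "j \<in> I" for j
      using disjoint_family_onD[OF E(2) that i(1)] i by (auto simp: indicator_def)
    then have "h x = (\<Sum>j\<in>I. if j = i then c j else 0)"
      unfolding h_def by (intro sum.cong) auto
    then have "h x = c i" using i(1) E(1) by simp
    then show ?thesis using lower[OF i] by simp
  next
    case False
    then have "h x = 0" unfolding h_def by (intro sum.neutral) (auto simp: indicator_def)
    then show ?thesis using g(2)[of x] by simp
  qed
  moreover have "integrable M h"
    unfolding h_def using E by (intro Bochner_Integration.integrable_sum integrable_mult_right integrable_real_indicator)
      (auto simp: emeasure_eq_measure)
  ultimately have "integral\<^sup>L M h \<le> integral\<^sup>L M g"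
    by (intro integral_mono g(1))
  then show ?thesis by (simp add: integral_h)
qed

context vilenkin
begin

lemma E_set_eq_prod_emb:
  "E_set k = prod_emb UNIV U {..<2 * k + 2} (PiE {..<2 * k + 2} (\<lambda>i. if i < 2 * k then {0} else {1..<m i}))"
  by (auto simp: E_set_def prod_emb_iff space_uniform_count_measure PiE_iff less_Suc_eq
      split: if_splits)
     (force dest: bspec[where x = "2 * k"], force dest: bspec[where x = "Suc (2 * k)"])

lemma sets_E_set: "E_set k \<in> sets \<mu>"
  unfolding E_set_eq_prod_emb vil_measure_eq
  by (intro measurable_prod_emb sets_PiM_I_finite) (auto simp: sets_uniform_count_measure m_pos)

lemma disjoint_family_E_set: "disjoint_family E_set"
  unfolding disjoint_family_on_def
proof (intro ballI impI)
  fix k k' :: nat assume "k \<noteq> k'"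
  then show "E_set k \<inter> E_set k' = {}"
    by (cases k k' rule: linorder_cases) (auto simp: E_set_def)
qed

lemma measure_E_set_ge: "1 / (4 * real (M (2 * k))) \<le> measure \<mu> (E_set k)"
proof -
  have half: "1 / 2 \<le> real (n - 1) / real n" if "2 \<le> n" for n :: nat
    using that by (simp add: field_simps of_nat_diff)
  have "1 / (4 * real (M (2 * k))) = (\<Prod>i<2 * k. 1 / real (m i)) * (1 / 2) * (1 / 2)"
    by (simp add: vilM_def prod_dividef)
  also have "\<dots> \<le> (\<Prod>i<2 * k. 1 / real (m i))
      * (real (m (2 * k) - 1) / real (m (2 * k))) * (real (m (Suc (2 * k)) - 1) / real (m (Suc (2 * k))))"
    using half[OF m_ge_2[of "2 * k"]] half[OF m_ge_2[of "Suc (2 * k)"]]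
    by (intro mult_mono mult_nonneg_nonneg prod_nonneg) (auto simp: m_ge_2)
  also have "\<dots> = (\<Prod>i<2 * k + 2. measure (U i) (if i < 2 * k then {0} else {1..<m i}))"
    by (simp add: measure_uniform_count_measure m_pos)
  also have "\<dots> = measure \<mu> (E_set k)"
    unfolding E_set_eq_prod_emb vil_measure_eq
    by (rule measure_PiM_emb[symmetric]) (auto simp: sets_uniform_count_measure m_pos)
  finally show ?thesis .
qed

lemma measurable_fejer_sum [measurable]: "fejer_sum Q \<in> borel_measurable \<mu>"
  unfolding fejer_sum_def[abs_def] by measurable

lemma norm_fejer_sum_le: "norm (fejer_sum Q x) \<le> real Q * real Q"
proof -
  have "norm (fejer_sum Q x) \<le> (\<Sum>j<Q. norm (of_nat (Q - 1 - j) * psi j x))"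
    unfolding fejer_sum_def by (rule norm_sum)
  also have "\<dots> \<le> (\<Sum>j<Q. real Q)"
  proof (rule sum_mono)
    fix j
    have "norm (of_nat (Q - 1 - j) * psi j x) = real (Q - 1 - j)"
      by (simp only: norm_mult norm_of_nat norm_vil_psi mult_1_right)
    then show "norm (of_nat (Q - 1 - j) * psi j x) \<le> real Q" by simp
  qed
  finally show ?thesis by simp
qed

text \<open>Each \<open>E_k\<close>, \<open>1 \<le> k < A\<close>, contributes at least \<open>M_{2k}/(2\<surd>q) \<cdot> 1/(4 M_{2k})\<close>.\<close>

lemma integral_sqrt_norm_fejer_sum_ge:
  assumes q: "0 < q"
  shows "real (A - 1) / (8 * sqrt q) \<le> (\<integral>x. sqrt (norm (fejer_sum (qsum A) x) / q) \<partial>\<mu>)"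
proof -
  interpret prob_space \<mu> by (rule prob_space_vil_measure)
  define c where "c k = real (M (2 * k)) / (2 * sqrt q)" for k
  have lower: "c k \<le> sqrt (norm (fejer_sum (qsum A) x) / q)"
    if "k \<in> {1..<A}" "x \<in> E_set k" for k x
  proof -
    have "real (M (2 * k))^2 / 4 / q \<le> norm (fejer_sum (qsum A) x) / q"
      using norm_fejer_sum_qsum_ge[OF that(2)] that(1) q by (intro divide_right_mono) auto
    then have "sqrt (real (M (2 * k))^2 / 4 / q) \<le> sqrt (norm (fejer_sum (qsum A) x) / q)"
      by (rule real_sqrt_le_mono)
    moreover have "sqrt (real (M (2 * k))^2 / 4 / q) = c k"
      using q by (simp add: c_def real_sqrt_divide real_sqrt_mult)
    ultimately show ?thesis by metis
  qed
  have integrable: "integrable \<mu> (\<lambda>x. sqrt (norm (fejer_sum (qsum A) x) / q))"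
  proof (rule integrable_const_bound[where B = "sqrt (real (qsum A) * real (qsum A) / q)"])
    show "AE x in \<mu>. norm (sqrt (norm (fejer_sum (qsum A) x) / q)) \<le> sqrt (real (qsum A) * real (qsum A) / q)"
      using norm_fejer_sum_le q by (intro AE_I2) (auto intro!: divide_right_mono)
  qed measurable
  have "real (A - 1) / (8 * sqrt q) = (\<Sum>k\<in>{1..<A}. c k * (1 / (4 * real (M (2 * k)))))"
    using q by (simp add: c_def vilM_pos[THEN gr_implies_not0])
  also have "\<dots> \<le> (\<Sum>k\<in>{1..<A}. c k * measure \<mu> (E_set k))"
    using measure_E_set_ge q by (intro sum_mono mult_left_mono) (auto simp: c_def)
  also have "\<dots> \<le> (\<integral>x. sqrt (norm (fejer_sum (qsum A) x) / q) \<partial>\<mu>)"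
    using disjoint_family_E_set q
    by (intro sum_measure_le_integral integrable lower sets_E_set)
       (auto simp: disjoint_family_on_def)
  finally show ?thesis .
qed

end

text \<open>The constant \<open>1/48\<close> works for every \<open>m\<close> with \<open>m_k \<ge> 2\<close>.\<close>

theorem mainTheorem5:
  fixes m :: "nat \<Rightarrow> nat"
  assumes "\<And>k. m k \<ge> 2"
    and "\<exists>B. \<forall>k. m k \<le> B"
  shows "\<exists>c>0. \<forall>A::nat. A \<ge> 3 \<longrightarrow>
    (let q = (\<Sum>i\<le>A. vilM m (2 * i));
         f = (\<lambda>x. vil_D m (vilM m (2 * A + 1)) x - vil_D m (vilM m (2 * A)) x)
     in (\<integral>x. norm (vil_sigma m q f x) powr (1/2) \<partial>vil_measure m)
          \<ge> c * real A / sqrt (real (vilM m (2 * A))))"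
proof -
  interpret vilenkin m by unfold_locales (rule assms(1))
  have "1 / 48 * real A / sqrt (real (M (2 * A))) \<le> (\<integral>x. norm (vil_sigma m (\<Sum>i\<le>A. M (2 * i))
      (\<lambda>x. vil_D m (M (2 * A + 1)) x - vil_D m (M (2 * A)) x) x) powr (1/2) \<partial>\<mu>)"
    if A: "3 \<le> A" for A
  proof -
    define q where "q = qsum (Suc A)"
    have q: "q = M (2 * A) + qsum A" by (simp add: q_def qsum_def)
    then have q_pos: "0 < q" and "real q \<le> 4 * real (M (2 * A))"
      using vilM_pos[of "2 * A"] qsum_less_vilM[of A] by simp_all
    then have sqrt_q: "sqrt q \<le> 2 * sqrt (M (2 * A))"
      using real_sqrt_le_mono[of q "4 * M (2 * A)"] by (simp add: real_sqrt_mult)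
    have "real A / 48 \<le> real (A - 1) / 16" using A by (simp add: of_nat_diff)
    then have "1 / 48 * real A / sqrt (M (2 * A)) \<le> real (A - 1) / (8 * (2 * sqrt (M (2 * A))))"
      by (simp add: divide_right_mono flip: divide_divide_eq_left)
    also have "\<dots> \<le> real (A - 1) / (8 * sqrt q)"
      using sqrt_q q_pos vilM_pos[of "2 * A"] by (intro divide_left_mono) auto
    also have "\<dots> \<le> (\<integral>x. sqrt (norm (fejer_sum (qsum A) x) / q) \<partial>\<mu>)"
      using q_pos by (intro integral_sqrt_norm_fejer_sum_ge) simp
    also have "\<dots> = (\<integral>x. norm (vil_sigma m q
        (\<lambda>x. vil_D m (M (2 * A + 1)) x - vil_D m (M (2 * A)) x) x) powr (1/2) \<partial>\<mu>)"
      unfolding q_def vil_sigma_test_function by (simp add: norm_mult norm_divide powr_half_sqrt)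
    finally show ?thesis by (simp add: q_def qsum_def lessThan_Suc_atMost)
  qed
  then show ?thesis unfolding Let_def by (intro exI[of _ "1 / 48"]) auto
qed

end
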